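(* Let $n=2r+1$, $\mathcal D=\mathbb F_q^{2d+1}$ with a non-degenerate symmetric bilinear form $Q$, let $\mathcal D''\subseteq\mathcal D$ be an isotropic subspace of dimension $s$, and let $L=(L_i)_{0\le i\le n}$ be an $n$-step flag $0=L_0\subseteq L_1\subseteq\cdots\subseteq L_n=\mathcal D$ with $L_i=L_j^\perp$ whenever $i+j=n$. Then there exist subspaces $T,W\subseteq\mathcal D$ such that: (a) $\mathcal D=\mathcal D''\oplus T\oplus W$ and $(\mathcal D'')^\perp=\mathcal D''\oplus T$; (b) $W$ is isotropic and $T\perp W$; (c) there are bases $\{z_1,\dots,z_s\}$ of $\mathcal D''$ and $\{w_1,\dots,w_s\}$ of $W$ with $Q(z_i,w_j)=\delta_{ij}$; (d) $L_i=(L_i\cap\mathcal D'')\oplus(L_i\cap T)\oplus(L_i\cap W)$ for all $1\le i\le n-1$.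
   Context: $q$ is a power of an odd prime. $W^\perp$ denotes the orthogonal complement with respect to $Q$; a subspace $W$ is isotropic if $W\subseteq W^\perp$. *)

theory Defs
  imports "HOL-Analysis.Analysis"
begin

text \<open>Vectors of the space D = F_q^(2d+1) are modelled as elements of 'a ^ 'n,
  where 'a is a finite field and 'n a finite index type; vector-space notions
  (subspace, span, independence, dim) are those of the library interpretation vec.\<close>

definition bilinear_form :: "('a::field ^ 'n \<Rightarrow> 'a ^ 'n \<Rightarrow> 'a) \<Rightarrow> bool" where
  "bilinear_form Q \<longleftrightarrow>
     (\<forall>x y z. Q (x + y) z = Q x z + Q y z) \<and>
     (\<forall>c x y. Q (c *s x) y = c * Q x y) \<and>
     (\<forall>x y z. Q x (y + z) = Q x y + Q x z) \<and>
     (\<forall>c x y. Q x (c *s y) = c * Q x y)"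

definition symmetric_form :: "('v \<Rightarrow> 'v \<Rightarrow> 'a) \<Rightarrow> bool" where
  "symmetric_form Q \<longleftrightarrow> (\<forall>x y. Q x y = Q y x)"

definition nondegenerate_form :: "('a::field ^ 'n \<Rightarrow> 'a ^ 'n \<Rightarrow> 'a) \<Rightarrow> bool" where
  "nondegenerate_form Q \<longleftrightarrow> (\<forall>x. (\<forall>y. Q x y = 0) \<longrightarrow> x = 0)"

definition orth_compl :: "('v \<Rightarrow> 'v \<Rightarrow> 'a::zero) \<Rightarrow> 'v set \<Rightarrow> 'v set" where
  "orth_compl Q W = {x. \<forall>y\<in>W. Q x y = 0}"

definition isotropic :: "('v \<Rightarrow> 'v \<Rightarrow> 'a::zero) \<Rightarrow> 'v set \<Rightarrow> bool" where
  "isotropic Q W \<longleftrightarrow> W \<subseteq> orth_compl Q W"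

definition orthogonal_sets :: "('v \<Rightarrow> 'v \<Rightarrow> 'a::zero) \<Rightarrow> 'v set \<Rightarrow> 'v set \<Rightarrow> bool" where
  "orthogonal_sets Q A B \<longleftrightarrow> (\<forall>a\<in>A. \<forall>b\<in>B. Q a b = 0)"

definition direct_sum2 :: "'v::ab_group_add set \<Rightarrow> 'v set \<Rightarrow> 'v set \<Rightarrow> bool" where
  "direct_sum2 S A B \<longleftrightarrow> A \<subseteq> S \<and> B \<subseteq> S \<and>
     (\<forall>v\<in>S. \<exists>!p. fst p \<in> A \<and> snd p \<in> B \<and> v = fst p + snd p)"

definition direct_sum3 :: "'v::ab_group_add set \<Rightarrow> 'v set \<Rightarrow> 'v set \<Rightarrow> 'v set \<Rightarrow> bool" where
  "direct_sum3 S A B C \<longleftrightarrow> A \<subseteq> S \<and> B \<subseteq> S \<and> C \<subseteq> S \<and>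
     (\<forall>v\<in>S. \<exists>!(a, b, c). a \<in> A \<and> b \<in> B \<and> c \<in> C \<and> v = a + b + c)"

end

theory Submission
  imports Defs "HOL-Number_Theory.Residues"
begin

text \<open>
  The bases are built one hyperbolic pair at a time. Given pairs (z j, w j), j < k < s, take
  z k \<in> D'' outside span {z j} minus its expansion \<Sum> Q(z k, w j) z j. If a is the least level
  with z k \<in> L a, then z k \<notin> L (a - 1) = (L b)\<perp> where a + b = n + 1, so some v \<in> L b pairs
  nontrivially with z k. Stripping v of its components along the earlier pairs, normalising,
  and subtracting Q(v, v)/2 \<sqdot> z k (this is where 2 \<noteq> 0 is used) yields an isotropic partner
  w k \<in> L b. Since L i \<perp> L j for i + j \<le> n, levels with a + b = n + 1 make each pair adapted to
  the flag: a vector of L i pairing nontrivially with w k (resp. z k) forces z k (resp. w k)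
  into L i. Hence the projections v \<mapsto> \<Sum> Q(v, w j) z j and v \<mapsto> \<Sum> Q(v, z j) w j onto D'' and W
  along T = {z j, w j}\<perp> preserve every L i, which gives (d).
\<close>

lemma two_neq_zero_if_odd_card:
  assumes "odd CARD('a::{field,finite})"
  shows "(2::'a) \<noteq> 0"
proof
  assume "(2::'a) = 0"
  then have "CHAR('a) dvd 2"
    using of_nat_eq_0_iff_char_dvd[where 'a='a, of 2] by simp
  moreover have "CHAR('a) \<noteq> 1"
    using CHAR_not_1[where 'a='a] by simp
  moreover have "CHAR('a) > 0"
    by (simp add: finite_imp_CHAR_pos)
  ultimately have "CHAR('a) = 2"
    using dvd_imp_le[of "CHAR('a)" 2] by linarith
  then show False
    using CHAR_dvd_CARD[where 'a='a] assms by simp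
qed

lemma direct_sum3_by_projections:
  fixes p q :: "'v::ab_group_add \<Rightarrow> 'v"
  assumes "A \<subseteq> S" "B \<subseteq> S" "C \<subseteq> S"
    and decomp: "\<And>v. v \<in> S \<Longrightarrow> p v \<in> A \<and> v - p v - q v \<in> B \<and> q v \<in> C"
    and proj: "\<And>a b c. a \<in> A \<Longrightarrow> b \<in> B \<Longrightarrow> c \<in> C \<Longrightarrow> p (a + b + c) = a \<and> q (a + b + c) = c"
  shows "direct_sum3 S A B C"
  unfolding direct_sum3_def
proof (intro conjI assms ballI)
  fix v assume "v \<in> S"
  show "\<exists>!(a, b, c). a \<in> A \<and> b \<in> B \<and> c \<in> C \<and> v = a + b + c"
  proof (rule ex1I[of _ "(p v, v - p v - q v, q v)"])
    show "case (p v, v - p v - q v, q v) of (a, b, c) \<Rightarrow> a \<in> A \<and> b \<in> B \<and> c \<in> C \<and> v = a + b + c"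
      using decomp[OF \<open>v \<in> S\<close>] by simp
  next
    fix x assume "case x of (a, b, c) \<Rightarrow> a \<in> A \<and> b \<in> B \<and> c \<in> C \<and> v = a + b + c"
    then show "x = (p v, v - p v - q v, q v)"
      using proj by (cases x) auto
  qed
qed

lemma direct_sum2_by_projection:
  fixes p :: "'v::ab_group_add \<Rightarrow> 'v"
  assumes "A \<subseteq> S" "B \<subseteq> S"
    and decomp: "\<And>v. v \<in> S \<Longrightarrow> p v \<in> A \<and> v - p v \<in> B"
    and proj: "\<And>a b. a \<in> A \<Longrightarrow> b \<in> B \<Longrightarrow> p (a + b) = a"
  shows "direct_sum2 S A B"
  unfolding direct_sum2_def
proof (intro conjI assms ballI)
  fix v assume "v \<in> S"
  show "\<exists>!x. fst x \<in> A \<and> snd x \<in> B \<and> v = fst x + snd x"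
  proof (rule ex1I[of _ "(p v, v - p v)"])
    show "fst (p v, v - p v) \<in> A \<and> snd (p v, v - p v) \<in> B \<and> v = fst (p v, v - p v) + snd (p v, v - p v)"
      using decomp[OF \<open>v \<in> S\<close>] by simp
  next
    fix x assume "fst x \<in> A \<and> snd x \<in> B \<and> v = fst x + snd x"
    then show "x = (p v, v - p v)"
      using proj by (cases x) auto
  qed
qed

locale symmetric_bilinear =
  fixes Q :: "'a::field ^ 'n \<Rightarrow> 'a ^ 'n \<Rightarrow> 'a"
  assumes bilinear: "bilinear_form Q" and symmetric: "symmetric_form Q"
begin

lemma Q_commute: "Q x y = Q y x"
  using symmetric by (simp add: symmetric_form_def)

lemma Q_add_left: "Q (x + y) z = Q x z + Q y z"
  and Q_scale_left: "Q (c *s x) y = c * Q x y"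
  and Q_scale_right: "Q x (c *s y) = c * Q x y"
  using bilinear by (simp_all add: bilinear_form_def)

lemma Q_zero_left: "Q 0 y = 0"
  using Q_scale_left[of 0 0 y] by simp

lemma Q_diff_left: "Q (x - y) z = Q x z - Q y z"
  using Q_add_left[of "x - y" y z] by simp

lemma Q_diff_right: "Q x (y - z) = Q x y - Q x z"
  using Q_diff_left Q_commute by metis

lemma Q_sum_left: "Q (sum f A) y = (\<Sum>a\<in>A. Q (f a) y)"
  by (induction A rule: infinite_finite_induct) (auto simp: Q_zero_left Q_add_left)

lemmas Q_linear_left = Q_add_left Q_diff_left Q_scale_left Q_sum_left Q_zero_left

lemma Q_span_left_eq_0:
  assumes "x \<in> vec.span A" and "\<And>a. a \<in> A \<Longrightarrow> Q a y = 0"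
  shows "Q x y = 0"
  using assms(1)
  by (induction rule: vec.span_induct) (auto simp: vec.subspace_def Q_linear_left assms(2))

lemma isotropic_partner:
  assumes "(2::'a) \<noteq> 0" "Q z z = 0" "Q z w = 1"
  shows "Q z (w - (Q w w / 2) *s z) = 1"
    and "Q (w - (Q w w / 2) *s z) (w - (Q w w / 2) *s z) = 0"
proof -
  have "Q w z = 1" using assms(3) Q_commute by simp
  then show "Q z (w - (Q w w / 2) *s z) = 1"
    using assms by (simp add: Q_diff_right Q_scale_right)
  have "Q (w - (Q w w / 2) *s z) (w - (Q w w / 2) *s z) = Q w w - 2 * (Q w w / 2)"
    using assms \<open>Q w z = 1\<close> by (simp add: Q_diff_left Q_diff_right Q_scale_left Q_scale_right algebra_simps)
  also have "\<dots> = 0"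
    using assms(1) by simp
  finally show "Q (w - (Q w w / 2) *s z) (w - (Q w w / 2) *s z) = 0" .
qed

definition dual_families :: "nat \<Rightarrow> (nat \<Rightarrow> 'a ^ 'n) \<Rightarrow> (nat \<Rightarrow> 'a ^ 'n) \<Rightarrow> bool" where
  "dual_families k e u \<longleftrightarrow> (\<forall>i<k. \<forall>j<k. Q (e i) (u j) = (if i = j then 1 else 0))"

lemma dual_families_commute: "dual_families k e u \<Longrightarrow> dual_families k u e"
  by (auto simp: dual_families_def Q_commute)

lemma dual_families_inj_on:
  assumes "dual_families k e u"
  shows "inj_on e {..<k}"
proof (rule inj_onI)
  fix i j assume ij: "i \<in> {..<k}" "j \<in> {..<k}" "e i = e j"
  have "Q (e i) (u i) = 1" "Q (e j) (u i) = (if j = i then 1 else 0)"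
    using assms ij(1,2) unfolding dual_families_def by auto
  then have "(if j = i then 1 else 0) = (1::'a)"
    using ij(3) by simp
  then show "i = j"
    by (cases "j = i") auto
qed

lemma dual_families_independent:
  assumes "dual_families k e u"
  shows "vec.independent (e ` {..<k})"
  unfolding vec.dependent_def
proof
  assume "\<exists>x\<in>e ` {..<k}. x \<in> vec.span (e ` {..<k} - {x})"
  then obtain m where m: "m < k" "e m \<in> vec.span (e ` {..<k} - {e m})"
    by blast
  have "Q a (u m) = 0" if "a \<in> e ` {..<k} - {e m}" for a
  proof -
    from that obtain j where "j < k" "a = e j" "j \<noteq> m"
      by blast
    then show ?thesis
      using assms m(1) by (simp add: dual_families_def)
  qed
  then have "Q (e m) (u m) = 0"
    using Q_span_left_eq_0[OF m(2)] by blast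
  then show False
    using m(1) assms by (simp add: dual_families_def)
qed

definition expansion :: "nat \<Rightarrow> (nat \<Rightarrow> 'a ^ 'n) \<Rightarrow> (nat \<Rightarrow> 'a ^ 'n) \<Rightarrow> 'a ^ 'n \<Rightarrow> 'a ^ 'n" where
  "expansion k e u x = (\<Sum>j<k. Q x (u j) *s e j)"

lemma Q_expansion_left: "Q (expansion k e u x) y = (\<Sum>j<k. Q x (u j) * Q (e j) y)"
  by (simp add: expansion_def Q_sum_left Q_scale_left)

lemma Q_expansion_dual:
  assumes "dual_families k e u" "m < k"
  shows "Q (expansion k e u x) (u m) = Q x (u m)"
proof -
  have "Q (expansion k e u x) (u m) = (\<Sum>j<k. if j = m then Q x (u j) else 0)"
    unfolding Q_expansion_left using assms by (intro sum.cong) (auto simp: dual_families_def)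
  then show ?thesis
    using assms(2) by simp
qed

lemma Q_expansion_orthogonal:
  assumes "\<And>j. j < k \<Longrightarrow> Q (e j) y = 0"
  shows "Q (expansion k e u x) y = 0"
  unfolding Q_expansion_left using assms by simp

lemma expansion_cong:
  assumes "\<And>j. j < k \<Longrightarrow> Q x (u j) = Q y (u j)"
  shows "expansion k e u x = expansion k e u y"
  unfolding expansion_def using assms by simp

lemma expansion_mem_subspace:
  assumes "vec.subspace S" and "\<And>j. j < k \<Longrightarrow> Q x (u j) \<noteq> 0 \<Longrightarrow> e j \<in> S"
  shows "expansion k e u x \<in> S"
  unfolding expansion_def
proof (rule vec.subspace_sum[OF assms(1)])
  fix j assume "j \<in> {..<k}"
  then show "Q x (u j) *s e j \<in> S"
    using assms vec.subspace_0[OF assms(1)] vec.subspace_scale[OF assms(1)]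
    by (cases "Q x (u j) = 0") auto
qed

lemma expansion_mem_span: "expansion k e u x \<in> vec.span (e ` {..<k})"
  by (rule expansion_mem_subspace) (auto intro: vec.span_base)

lemma expansion_zero: "expansion k e u 0 = 0"
  by (simp add: expansion_def Q_zero_left)

lemma expansion_add: "expansion k e u (x + y) = expansion k e u x + expansion k e u y"
  by (simp add: expansion_def Q_add_left vector_sadd_rdistrib sum.distrib)

lemma expansion_scale: "expansion k e u (c *s x) = c *s expansion k e u x"
  by (simp add: expansion_def Q_scale_left vec.scale_sum_right)

lemma expansion_eq_self:
  assumes "dual_families k e u" "x \<in> vec.span (e ` {..<k})"
  shows "expansion k e u x = x"
  using assms(2)
proof (induction rule: vec.span_induct)
  case base
  show ?case
    by (simp add: vec.subspace_def expansion_zero expansion_add expansion_scale)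
next
  case (step x)
  then obtain m where "m < k" "x = e m"
    by blast
  have "expansion k e u (e m) = (\<Sum>j<k. if j = m then e m else 0)"
    unfolding expansion_def using assms(1) \<open>m < k\<close> by (intro sum.cong) (auto simp: dual_families_def)
  then show ?case
    using \<open>m < k\<close> \<open>x = e m\<close> by simp
qed

definition hyperbolic_family :: "nat \<Rightarrow> (nat \<Rightarrow> 'a ^ 'n) \<Rightarrow> (nat \<Rightarrow> 'a ^ 'n) \<Rightarrow> bool" where
  "hyperbolic_family k z w \<longleftrightarrow> dual_families k z w \<and>
     (\<forall>i<k. \<forall>j<k. Q (z i) (z j) = 0 \<and> Q (w i) (w j) = 0)"

definition hyperbolic_complement :: "nat \<Rightarrow> (nat \<Rightarrow> 'a ^ 'n) \<Rightarrow> (nat \<Rightarrow> 'a ^ 'n) \<Rightarrow> ('a ^ 'n) set" where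
  "hyperbolic_complement k z w = {x. \<forall>j<k. Q x (z j) = 0 \<and> Q x (w j) = 0}"

lemma subspace_hyperbolic_complement: "vec.subspace (hyperbolic_complement k z w)"
  by (auto simp: vec.subspace_def hyperbolic_complement_def Q_linear_left)

lemma residual_mem_hyperbolic_complement:
  assumes "hyperbolic_family k z w"
  shows "x - expansion k z w x - expansion k w z x \<in> hyperbolic_complement k z w"
proof -
  have dual: "dual_families k z w" "dual_families k w z"
    using assms dual_families_commute by (auto simp: hyperbolic_family_def)
  have "Q (expansion k z w x) (z m) = 0" "Q (expansion k w z x) (w m) = 0" if "m < k" for m
    using assms that by (auto intro!: Q_expansion_orthogonal simp: hyperbolic_family_def)
  then show ?thesis
    using dual by (simp add: hyperbolic_complement_def Q_diff_left Q_expansion_dual)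
qed

lemma Q_residual_left:
  assumes "\<And>j. j < k \<Longrightarrow> Q (z j) y = 0 \<and> Q (w j) y = 0"
  shows "Q (x - expansion k z w x - expansion k w z x) y = Q x y"
  using assms by (simp add: Q_diff_left Q_expansion_orthogonal)

lemma hyperbolic_decomposition_unique:
  assumes fam: "hyperbolic_family k z w"
    and a: "a \<in> vec.span (z ` {..<k})" and t: "t \<in> hyperbolic_complement k z w"
    and y: "y \<in> vec.span (w ` {..<k})"
  shows "expansion k z w (a + t + y) = a" and "expansion k w z (a + t + y) = y"
proof -
  have dual: "dual_families k z w" "dual_families k w z"
    using fam dual_families_commute by (auto simp: hyperbolic_family_def)
  have az: "Q a (z j) = 0" if "j < k" for j
    using Q_span_left_eq_0[OF a] fam that by (auto simp: hyperbolic_family_def)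
  have yw: "Q y (w j) = 0" if "j < k" for j
    using Q_span_left_eq_0[OF y] fam that by (auto simp: hyperbolic_family_def)
  have tz: "Q t (z j) = 0" and tw: "Q t (w j) = 0" if "j < k" for j
    using t that by (auto simp: hyperbolic_complement_def)
  have "expansion k z w (a + t + y) = expansion k z w a"
    by (rule expansion_cong) (simp add: Q_add_left tw yw)
  moreover have "expansion k w z (a + t + y) = expansion k w z y"
    by (rule expansion_cong) (simp add: Q_add_left az tz)
  ultimately show "expansion k z w (a + t + y) = a" and "expansion k w z (a + t + y) = y"
    using expansion_eq_self[OF dual(1) a] expansion_eq_self[OF dual(2) y] by simp_all
qed

lemma direct_sum3_hyperbolic:
  assumes fam: "hyperbolic_family k z w" and S: "vec.subspace S"
    and closed: "\<And>x. x \<in> S \<Longrightarrow> expansion k z w x \<in> S \<and> expansion k w z x \<in> S"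
  shows "direct_sum3 S (S \<inter> vec.span (z ` {..<k})) (S \<inter> hyperbolic_complement k z w)
     (S \<inter> vec.span (w ` {..<k}))"
proof (rule direct_sum3_by_projections[where p = "expansion k z w" and q = "expansion k w z"])
  fix x assume "x \<in> S"
  note expansion_mem_span[of k z w x] expansion_mem_span[of k w z x]
  then show "expansion k z w x \<in> S \<inter> vec.span (z ` {..<k}) \<and>
      x - expansion k z w x - expansion k w z x \<in> S \<inter> hyperbolic_complement k z w \<and>
      expansion k w z x \<in> S \<inter> vec.span (w ` {..<k})"
    using closed[OF \<open>x \<in> S\<close>] \<open>x \<in> S\<close> residual_mem_hyperbolic_complement[OF fam]
    by (simp add: vec.subspace_diff[OF S])
qed (use hyperbolic_decomposition_unique[OF fam] in auto)

lemma orthogonal_hyperbolic_complement_span: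
  "orthogonal_sets Q (hyperbolic_complement k z w) (vec.span (w ` {..<k}))"
  unfolding orthogonal_sets_def
proof (intro ballI)
  fix t y assume t: "t \<in> hyperbolic_complement k z w" and y: "y \<in> vec.span (w ` {..<k})"
  have "Q (w j) t = 0" if "j < k" for j
    using t that by (simp add: hyperbolic_complement_def Q_commute)
  then have "Q y t = 0"
    using Q_span_left_eq_0[OF y, of t] by blast
  then show "Q t y = 0"
    by (simp add: Q_commute)
qed

lemma isotropic_span_hyperbolic:
  assumes "hyperbolic_family k z w"
  shows "isotropic Q (vec.span (w ` {..<k}))"
  unfolding isotropic_def orth_compl_def
proof (intro subsetI CollectI ballI)
  fix x y assume x: "x \<in> vec.span (w ` {..<k})" and y: "y \<in> vec.span (w ` {..<k})"
  have "Q y (w j) = 0" if "j < k" for j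
    using Q_span_left_eq_0[OF y] assms that by (auto simp: hyperbolic_family_def)
  then have "Q (w j) y = 0" if "j < k" for j
    using that by (simp add: Q_commute)
  then show "Q x y = 0"
    using Q_span_left_eq_0[OF x, of y] by blast
qed

end

locale self_dual_flag = symmetric_bilinear Q for Q :: "'a::field ^ 'n \<Rightarrow> 'a ^ 'n \<Rightarrow> 'a" +
  fixes L :: "nat \<Rightarrow> ('a ^ 'n) set" and n :: nat
  assumes flag_subspace: "\<forall>i\<le>n. vec.subspace (L i)"
    and flag_0: "L 0 = {0}" and flag_top: "L n = UNIV"
    and flag_Suc: "\<forall>i<n. L i \<subseteq> L (Suc i)"
    and flag_perp: "\<forall>i j. i + j = n \<longrightarrow> L i = orth_compl Q (L j)"
begin

lemma flag_mono:
  assumes "i \<le> j" "j \<le> n"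
  shows "L i \<subseteq> L j"
  using assms
proof (induction j rule: dec_induct)
  case (step m)
  then have "L i \<subseteq> L m" and "L m \<subseteq> L (Suc m)"
    using flag_Suc by simp_all
  then show ?case
    by (rule order.trans)
qed simp

lemma flag_orthogonal:
  assumes "i + j \<le> n" "x \<in> L i" "y \<in> L j"
  shows "Q x y = 0"
proof -
  have "i \<le> n - j"
    using assms(1) by simp
  then have "x \<in> L (n - j)"
    using flag_mono[of i "n - j"] assms(2) by auto
  moreover have "L (n - j) = orth_compl Q (L j)"
    using flag_perp[rule_format, of "n - j" j] assms(1) by simp
  ultimately show ?thesis
    using assms(3) by (simp add: orth_compl_def)
qed

lemma flag_level_partner:
  assumes "x \<noteq> 0"
  obtains a b v where "a \<le> n" "b \<le> n" "a + b = Suc n" "x \<in> L a" "v \<in> L b" "Q x v \<noteq> 0"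
proof -
  define a where "a = (LEAST a. x \<in> L a)"
  have top: "x \<in> L n"
    by (simp add: flag_top)
  have "x \<in> L a"
    unfolding a_def using top by (rule LeastI)
  moreover have "a \<le> n"
    unfolding a_def using top by (rule Least_le)
  moreover have "a \<noteq> 0"
  proof
    assume "a = 0"
    then show False
      using \<open>x \<in> L a\<close> flag_0 assms by simp
  qed
  moreover have "x \<notin> L (a - 1)"
  proof (rule not_less_Least)
    show "a - 1 < (LEAST a. x \<in> L a)"
      using \<open>a \<noteq> 0\<close> unfolding a_def by simp
  qed
  moreover have "L (a - 1) = orth_compl Q (L (Suc n - a))"
    using flag_perp[rule_format, of "a - 1" "Suc n - a"] \<open>a \<le> n\<close> \<open>a \<noteq> 0\<close> by simp
  ultimately obtain v where "v \<in> L (Suc n - a)" "Q x v \<noteq> 0"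
    by (auto simp: orth_compl_def)
  then show ?thesis
    using that[of a "Suc n - a" v] \<open>x \<in> L a\<close> \<open>a \<le> n\<close> \<open>a \<noteq> 0\<close> by simp
qed

definition adapted_pair :: "'a ^ 'n \<Rightarrow> 'a ^ 'n \<Rightarrow> bool" where
  "adapted_pair z w \<longleftrightarrow> (\<exists>a b. a \<le> n \<and> b \<le> n \<and> a + b = Suc n \<and> z \<in> L a \<and> w \<in> L b)"

lemma adapted_pair_commute: "adapted_pair z w \<Longrightarrow> adapted_pair w z"
  unfolding adapted_pair_def by (metis add.commute)

lemma adapted_pair_mem:
  assumes "adapted_pair z w" "i \<le> n" "v \<in> L i" "Q v w \<noteq> 0"
  shows "z \<in> L i"
proof -
  obtain a b where ab: "a \<le> n" "b \<le> n" "a + b = Suc n" "z \<in> L a" "w \<in> L b"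
    using assms(1) by (auto simp: adapted_pair_def)
  have "\<not> i + b \<le> n"
    using flag_orthogonal[OF _ assms(3) ab(5)] assms(4) by auto
  then have "a \<le> i"
    using ab(3) by simp
  then show ?thesis
    using flag_mono[OF \<open>a \<le> i\<close> assms(2)] ab(4) by blast
qed

lemma expansion_mem_flag:
  assumes "\<And>j. j < k \<Longrightarrow> adapted_pair (e j) (u j)" "i \<le> n" "x \<in> L i"
  shows "expansion k e u x \<in> L i"
proof (rule expansion_mem_subspace)
  show "vec.subspace (L i)"
    using flag_subspace assms(2) by simp
  fix j assume "j < k" "Q x (u j) \<noteq> 0"
  then show "e j \<in> L i"
    using adapted_pair_mem[OF assms(1) assms(2,3)] by blast
qed

end

locale isotropic_subspace_in_flag = self_dual_flag Q L n
  for Q :: "'a::field ^ 'n \<Rightarrow> 'a ^ 'n \<Rightarrow> 'a" and L n +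
  fixes D :: "('a ^ 'n) set" and s :: nat
  assumes two_neq_zero: "(2::'a) \<noteq> 0"
    and D_subspace: "vec.subspace D" and D_isotropic: "isotropic Q D" and dim_D: "vec.dim D = s"
begin

lemma Q_D_eq_0: "x \<in> D \<Longrightarrow> y \<in> D \<Longrightarrow> Q x y = 0"
  using D_isotropic by (auto simp: isotropic_def orth_compl_def)

definition adapted_family :: "nat \<Rightarrow> (nat \<Rightarrow> 'a ^ 'n) \<Rightarrow> (nat \<Rightarrow> 'a ^ 'n) \<Rightarrow> bool" where
  "adapted_family k z w \<longleftrightarrow> (\<forall>j<k. z j \<in> D \<and> adapted_pair (z j) (w j)) \<and>
     dual_families k z w \<and> (\<forall>i<k. \<forall>j<k. Q (w i) (w j) = 0)"

lemma adapted_family_hyperbolic: "adapted_family k z w \<Longrightarrow> hyperbolic_family k z w"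
  by (auto simp: adapted_family_def hyperbolic_family_def Q_D_eq_0)

lemma adapted_family_Suc:
  assumes "adapted_family k z w" "zk \<in> D" "adapted_pair zk wk"
    and "\<forall>j<k. Q zk (w j) = 0" "wk \<in> hyperbolic_complement k z w"
    and "Q zk wk = 1" "Q wk wk = 0"
  shows "adapted_family (Suc k) (z(k := zk)) (w(k := wk))"
proof -
  have zw: "Q (z i) (w j) = (if i = j then 1 else 0)" and ww: "Q (w i) (w j) = 0"
    if "i < k" "j < k" for i j
    using assms(1) that by (simp_all add: adapted_family_def dual_families_def)
  have z_D: "z j \<in> D" and pairs: "adapted_pair (z j) (w j)" if "j < k" for j
    using assms(1) that by (simp_all add: adapted_family_def)
  have wk_z: "Q wk (z j) = 0" and wk_w: "Q wk (w j) = 0" if "j < k" for j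
    using assms(5) that by (simp_all add: hyperbolic_complement_def)
  then have z_wk: "Q (z j) wk = 0" and w_wk: "Q (w j) wk = 0" if "j < k" for j
    using that by (simp_all add: Q_commute)
  have "Q ((z(k := zk)) i) ((w(k := wk)) j) = (if i = j then 1 else 0)" if "i < Suc k" "j < Suc k" for i j
    using that by (cases "i = k"; cases "j = k") (simp_all add: less_Suc_eq zw z_wk assms(4,6))
  moreover have "Q ((w(k := wk)) i) ((w(k := wk)) j) = 0" if "i < Suc k" "j < Suc k" for i j
    using that by (cases "i = k"; cases "j = k") (simp_all add: less_Suc_eq ww w_wk wk_w assms(7))
  moreover have "(z(k := zk)) j \<in> D \<and> adapted_pair ((z(k := zk)) j) ((w(k := wk)) j)"
    if "j < Suc k" for j
    using that by (cases "j = k") (simp_all add: less_Suc_eq z_D pairs assms(2,3))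
  ultimately show ?thesis
    unfolding adapted_family_def dual_families_def by blast
qed

lemma exists_vector_orthogonal_to_family:
  assumes fam: "adapted_family k z w" and "k < s"
  obtains x where "x \<in> D" "x \<noteq> 0" "\<forall>j<k. Q x (w j) = 0"
proof -
  have "\<not> D \<subseteq> vec.span (z ` {..<k})"
  proof
    assume "D \<subseteq> vec.span (z ` {..<k})"
    then have "vec.dim D \<le> card (z ` {..<k})"
      by (rule vec.dim_le_card) simp
    also have "\<dots> \<le> k"
      using card_image_le[of "{..<k}" z] by simp
    finally show False
      using dim_D \<open>k < s\<close> by simp
  qed
  then obtain y where y: "y \<in> D" "y \<notin> vec.span (z ` {..<k})"
    by blast
  have "expansion k z w y \<in> D"
    using fam by (intro expansion_mem_subspace[OF D_subspace]) (simp add: adapted_family_def)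
  then have "y - expansion k z w y \<in> D"
    using vec.subspace_diff[OF D_subspace y(1)] by blast
  moreover have "y - expansion k z w y \<noteq> 0"
    using y(2) expansion_mem_span[of k z w y] by auto
  moreover have "\<forall>j<k. Q (y - expansion k z w y) (w j) = 0"
    using fam by (simp add: Q_diff_left Q_expansion_dual adapted_family_def)
  ultimately show thesis
    using that by blast
qed

lemma mem_hyperbolic_complementI:
  assumes "adapted_family k z w" "x \<in> D" "\<forall>j<k. Q x (w j) = 0"
  shows "x \<in> hyperbolic_complement k z w"
  using assms by (auto simp: hyperbolic_complement_def adapted_family_def Q_D_eq_0)

lemma exists_partner_in_level:
  assumes fam: "adapted_family k z w"
    and x: "x \<in> D" "x \<noteq> 0" "\<forall>j<k. Q x (w j) = 0"
  obtains a b y where "a \<le> n" "b \<le> n" "a + b = Suc n" "x \<in> L a" "y \<in> L b"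
    "y \<in> hyperbolic_complement k z w" "Q x y = 1"
proof -
  have hyp: "hyperbolic_family k z w"
    using fam by (rule adapted_family_hyperbolic)
  have pairs: "adapted_pair (z j) (w j)" "adapted_pair (w j) (z j)" if "j < k" for j
    using fam that adapted_pair_commute by (auto simp: adapted_family_def)
  obtain a b v where ab: "a \<le> n" "b \<le> n" "a + b = Suc n" "x \<in> L a" and v: "v \<in> L b" "Q x v \<noteq> 0"
    using flag_level_partner[OF x(2)] .
  have Lb: "vec.subspace (L b)"
    using flag_subspace ab(2) by simp
  define v' where "v' = v - expansion k z w v - expansion k w z v"
  have v'_L: "v' \<in> L b"
    unfolding v'_def
    using expansion_mem_flag[OF pairs(1) ab(2) v(1)] expansion_mem_flag[OF pairs(2) ab(2) v(1)] v(1)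
    by (simp add: vec.subspace_diff[OF Lb])
  have v'_compl: "v' \<in> hyperbolic_complement k z w"
    unfolding v'_def by (rule residual_mem_hyperbolic_complement[OF hyp])
  have "Q v' x = Q v x"
    unfolding v'_def using mem_hyperbolic_complementI[OF fam x(1,3)]
    by (intro Q_residual_left) (simp add: hyperbolic_complement_def Q_commute)
  then have "Q x v' \<noteq> 0"
    using v(2) by (simp add: Q_commute)
  then have "(1 / Q x v') *s v' \<in> L b" "(1 / Q x v') *s v' \<in> hyperbolic_complement k z w"
    "Q x ((1 / Q x v') *s v') = 1"
    using v'_L v'_compl
    by (simp_all add: vec.subspace_scale[OF Lb] vec.subspace_scale[OF subspace_hyperbolic_complement]
        Q_scale_right)
  with ab show thesis
    using that by blast
qed

lemma exists_adapted_partner: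
  assumes fam: "adapted_family k z w"
    and x: "x \<in> D" "x \<noteq> 0" "\<forall>j<k. Q x (w j) = 0"
  obtains y where "adapted_pair x y" "y \<in> hyperbolic_complement k z w" "Q x y = 1" "Q y y = 0"
proof -
  obtain a b y1 where ab: "a \<le> n" "b \<le> n" "a + b = Suc n" "x \<in> L a"
    and y1: "y1 \<in> L b" "y1 \<in> hyperbolic_complement k z w" "Q x y1 = 1"
    using exists_partner_in_level[OF fam x] .
  have Lb: "vec.subspace (L b)"
    using flag_subspace ab(2) by simp
  define y where "y = y1 - (Q y1 y1 / 2) *s x"
  have "Q x y = 1" "Q y y = 0"
    unfolding y_def using isotropic_partner[OF two_neq_zero Q_D_eq_0[OF x(1) x(1)] y1(3)] by simp_all
  moreover have "y \<in> hyperbolic_complement k z w"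
    unfolding y_def using y1(2) mem_hyperbolic_complementI[OF fam x(1,3)]
      subspace_hyperbolic_complement
    by (simp add: vec.subspace_diff vec.subspace_scale)
  moreover have "y \<in> L b"
  proof (cases "a \<le> b")
    case True
    then have "x \<in> L b"
      using flag_mono ab(2,4) by blast
    then show ?thesis
      unfolding y_def using y1(1) by (simp add: vec.subspace_diff[OF Lb] vec.subspace_scale[OF Lb])
  next
    case False
    \<comment> \<open>then \<open>b + b \<le> n\<close>, so \<open>L b\<close> is isotropic and no correction is needed\<close>
    then have "Q y1 y1 = 0"
      using flag_orthogonal[OF _ y1(1) y1(1)] ab(3) by simp
    then show ?thesis
      unfolding y_def using y1(1) by simp
  qed
  then have "adapted_pair x y"
    using ab by (auto simp: adapted_pair_def)
  ultimately show thesis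
    using that by blast
qed

lemma adapted_family_exists: "k \<le> s \<Longrightarrow> \<exists>z w. adapted_family k z w"
proof (induction k)
  case 0
  show ?case
    by (simp add: adapted_family_def dual_families_def)
next
  case (Suc k)
  then obtain z w where fam: "adapted_family k z w"
    by auto
  obtain x where x: "x \<in> D" "x \<noteq> 0" "\<forall>j<k. Q x (w j) = 0"
    using exists_vector_orthogonal_to_family[OF fam] Suc.prems by auto
  obtain y where "adapted_pair x y" "y \<in> hyperbolic_complement k z w" "Q x y = 1" "Q y y = 0"
    using exists_adapted_partner[OF fam x] .
  then show ?case
    using adapted_family_Suc[OF fam x(1)] x(3) by blast
qed

lemma span_adapted_family:
  assumes "adapted_family s z w"
  shows "vec.span (z ` {..<s}) = D"
proof -
  have dual: "dual_families s z w"
    using assms by (simp add: adapted_family_def)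
  have "vec.dim (z ` {..<s}) = s"
    using vec.dim_eq_card_independent[OF dual_families_independent[OF dual]]
      card_image[OF dual_families_inj_on[OF dual]] by simp
  then have "vec.span (z ` {..<s}) = vec.span D"
    using assms dim_D by (intro vec.dim_eq_span) (auto simp: adapted_family_def)
  then show ?thesis
    using D_subspace by simp
qed

lemma adapted_family_bases:
  assumes "adapted_family s z w"
  shows "inj_on z {..<s} \<and> vec.independent (z ` {..<s}) \<and> vec.span (z ` {..<s}) = D \<and>
    inj_on w {..<s} \<and> vec.independent (w ` {..<s}) \<and>
    (\<forall>i<s. \<forall>j<s. Q (z i) (w j) = (if i = j then 1 else 0))"
proof -
  have dual: "dual_families s z w" "dual_families s w z"
    using assms dual_families_commute by (auto simp: adapted_family_def)
  then show ?thesis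
    using dual_families_inj_on[OF dual(1)] dual_families_independent[OF dual(1)]
      dual_families_inj_on[OF dual(2)] dual_families_independent[OF dual(2)]
      span_adapted_family[OF assms]
    by (simp add: dual_families_def[of s z w])
qed

lemma direct_sum3_space:
  assumes "adapted_family s z w"
  shows "direct_sum3 UNIV D (hyperbolic_complement s z w) (vec.span (w ` {..<s}))"
  using direct_sum3_hyperbolic[OF adapted_family_hyperbolic[OF assms] vec.subspace_UNIV]
    span_adapted_family[OF assms] by simp

lemma direct_sum3_flag:
  assumes fam: "adapted_family s z w" and "i \<le> n"
  shows "direct_sum3 (L i) (L i \<inter> D) (L i \<inter> hyperbolic_complement s z w)
     (L i \<inter> vec.span (w ` {..<s}))"
proof -
  have "adapted_pair (z j) (w j)" "adapted_pair (w j) (z j)" if "j < s" for j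
    using fam that adapted_pair_commute by (auto simp: adapted_family_def)
  then have "expansion s z w x \<in> L i \<and> expansion s w z x \<in> L i" if "x \<in> L i" for x
    using expansion_mem_flag[OF _ \<open>i \<le> n\<close> that] by blast
  then show ?thesis
    using direct_sum3_hyperbolic[OF adapted_family_hyperbolic[OF fam], of "L i"] flag_subspace \<open>i \<le> n\<close>
      span_adapted_family[OF fam] by simp
qed

lemma direct_sum2_orth_compl:
  assumes "adapted_family s z w"
  shows "direct_sum2 (orth_compl Q D) D (hyperbolic_complement s z w)"
proof (rule direct_sum2_by_projection[where p = "expansion s z w"])
  have hyp: "hyperbolic_family s z w"
    using assms by (rule adapted_family_hyperbolic)
  have span: "vec.span (z ` {..<s}) = D"
    using assms by (rule span_adapted_family)
  show "D \<subseteq> orth_compl Q D"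
    using D_isotropic by (simp add: isotropic_def)
  show "hyperbolic_complement s z w \<subseteq> orth_compl Q D"
  proof
    fix t assume t: "t \<in> hyperbolic_complement s z w"
    have "Q (z j) t = 0" if "j < s" for j
      using t that by (simp add: hyperbolic_complement_def Q_commute)
    then have "Q d t = 0" if "d \<in> D" for d
      using Q_span_left_eq_0[of d "z ` {..<s}" t] that span by blast
    then show "t \<in> orth_compl Q D"
      by (auto simp: orth_compl_def Q_commute)
  qed
  fix v assume "v \<in> orth_compl Q D"
  then have "expansion s w z v = 0"
    using assms by (auto simp: expansion_def orth_compl_def adapted_family_def)
  then show "expansion s z w v \<in> D \<and> v - expansion s z w v \<in> hyperbolic_complement s z w"
    using residual_mem_hyperbolic_complement[OF hyp, of v] expansion_mem_span[of s z w v] span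
    by simp
next
  fix a t assume "a \<in> D" and t: "t \<in> hyperbolic_complement s z w"
  then have "a \<in> vec.span (z ` {..<s})"
    using span_adapted_family[OF assms] by simp
  from hyperbolic_decomposition_unique(1)[OF adapted_family_hyperbolic[OF assms] this t vec.span_zero]
  show "expansion s z w (a + t) = a"
    by simp
qed

end

theorem mainTheorem12:
  fixes Q :: "'a::{field,finite} ^ 'n \<Rightarrow> 'a ^ 'n \<Rightarrow> 'a"
    and Dpp :: "('a ^ 'n) set"
    and L :: "nat \<Rightarrow> ('a ^ 'n) set"
    and d r s n :: nat
  assumes q_odd: "odd CARD('a)"
    and dimD: "CARD('n) = 2 * d + 1"
    and Q_bil: "bilinear_form Q"
    and Q_sym: "symmetric_form Q"
    and Q_nondeg: "nondegenerate_form Q"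
    and Dpp_sub: "vec.subspace Dpp"
    and Dpp_iso: "isotropic Q Dpp"
    and Dpp_dim: "vec.dim Dpp = s"
    and n_def: "n = 2 * r + 1"
    and L_sub: "\<forall>i\<le>n. vec.subspace (L i)"
    and L_0: "L 0 = {0}"
    and L_n: "L n = UNIV"
    and L_mono: "\<forall>i<n. L i \<subseteq> L (Suc i)"
    and L_perp: "\<forall>i j. i + j = n \<longrightarrow> L i = orth_compl Q (L j)"
  shows "\<exists>T W. vec.subspace T \<and> vec.subspace W \<and>
     direct_sum3 UNIV Dpp T W \<and>
     direct_sum2 (orth_compl Q Dpp) Dpp T \<and>
     isotropic Q W \<and> orthogonal_sets Q T W \<and>
     (\<exists>z w :: nat \<Rightarrow> 'a ^ 'n.
        inj_on z {..<s} \<and> vec.independent (z ` {..<s}) \<and> vec.span (z ` {..<s}) = Dpp \<and>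
        inj_on w {..<s} \<and> vec.independent (w ` {..<s}) \<and> vec.span (w ` {..<s}) = W \<and>
        (\<forall>i<s. \<forall>j<s. Q (z i) (w j) = (if i = j then 1 else 0))) \<and>
     (\<forall>i. 1 \<le> i \<and> i \<le> n - 1 \<longrightarrow>
        direct_sum3 (L i) (L i \<inter> Dpp) (L i \<inter> T) (L i \<inter> W))"
proof -
  interpret isotropic_subspace_in_flag Q L n Dpp s
    by unfold_locales (fact Q_bil Q_sym L_sub L_0 L_n L_mono L_perp
        two_neq_zero_if_odd_card[OF q_odd] Dpp_sub Dpp_iso Dpp_dim)+
  obtain z w where fam: "adapted_family s z w"
    using adapted_family_exists by blast
  show ?thesis
    by (rule exI[of _ "hyperbolic_complement s z w"], rule exI[of _ "vec.span (w ` {..<s})"],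
        intro conjI exI[of _ z] exI[of _ w])
      (use subspace_hyperbolic_complement orthogonal_hyperbolic_complement_span
        direct_sum3_space[OF fam] direct_sum2_orth_compl[OF fam]
        isotropic_span_hyperbolic[OF adapted_family_hyperbolic[OF fam]]
        adapted_family_bases[OF fam] direct_sum3_flag[OF fam] in auto)
qed

end
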